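(* Define the pre-sum $A\boxplus B$ of two triangles $A=A_1A_2A_3$, $B=B_1B_2B_3$ in the real projective plane as follows. If $A$ and $B$ are perspective from a point $S$ (the lines $A_iB_i$ all pass through $S$), then $A\boxplus B=C_1C_2C_3$ where, for every permutation $(i,j,k)$ of $(1,2,3)$, $P_{ij}=A_iA_k\cap B_jB_k$ and $C_k=P_{ik}P_{ki}\cap P_{jk}P_{kj}$. If $A$ and $B$ are perspective from a line $s$ (the points $A_kA_j\cap B_kB_j$ all lie on $s$), then $A\boxplus B=C_1C_2C_3$ with $C_k=A_iB_j\cap A_jB_i$ for every permutation $(i,j,k)$. Then, whenever the constructions involved are well defined (general position): (1) $A\boxplus B=B\boxplus A$; (2) if $A\boxplus B=C$, then $A\boxplus C=B$ and $B\boxplus C=A$. *)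

theory Defs
  imports "HOL-Analysis.Analysis" "HOL-Analysis.Cross3"
begin

text \<open>Real projective plane in homogeneous coordinates: points and lines are
nonzero vectors of real^3 up to scaling; incidence is the dot product;
the join of two points and the meet of two lines are cross products
(a zero result signals that the construction is not defined).
A triangle is a matrix whose rows A$1, A$2, A$3 are its vertices.\<close>

definition proj_eq :: "real^3 \<Rightarrow> real^3 \<Rightarrow> bool" where
  "proj_eq p q \<longleftrightarrow> p \<noteq> 0 \<and> q \<noteq> 0 \<and> cross3 p q = 0"

definition join :: "real^3 \<Rightarrow> real^3 \<Rightarrow> real^3" where
  "join p q = cross3 p q"

definition meet :: "real^3 \<Rightarrow> real^3 \<Rightarrow> real^3" where
  "meet l m = cross3 l m"

definition incident :: "real^3 \<Rightarrow> real^3 \<Rightarrow> bool" where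
  "incident p l \<longleftrightarrow> inner p l = 0"

definition triangle :: "real^3^3 \<Rightarrow> bool" where
  "triangle A \<longleftrightarrow> det A \<noteq> 0"

definition tri_eq :: "real^3^3 \<Rightarrow> real^3^3 \<Rightarrow> bool" where
  "tri_eq C D \<longleftrightarrow> (\<forall>k. proj_eq (C$k) (D$k))"

definition persp_point :: "real^3^3 \<Rightarrow> real^3^3 \<Rightarrow> bool" where
  "persp_point A B \<longleftrightarrow> (\<exists>S. S \<noteq> 0 \<and>
     (\<forall>i. join (A$i) (B$i) \<noteq> 0 \<and> incident S (join (A$i) (B$i))))"

definition persp_line :: "real^3^3 \<Rightarrow> real^3^3 \<Rightarrow> bool" where
  "persp_line A B \<longleftrightarrow> (\<exists>s. s \<noteq> 0 \<and>
     (\<forall>j k. j \<noteq> k \<longrightarrow>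
        meet (join (A$k) (A$j)) (join (B$k) (B$j)) \<noteq> 0 \<and>
        incident (meet (join (A$k) (A$j)) (join (B$k) (B$j))) s))"

definition Ppt :: "real^3^3 \<Rightarrow> real^3^3 \<Rightarrow> 3 \<Rightarrow> 3 \<Rightarrow> 3 \<Rightarrow> real^3" where
  "Ppt A B i j k = meet (join (A$i) (A$k)) (join (B$j) (B$k))"

text \<open>Pre-sum, point-perspective case: C_k = P_ik P_ki \<inter> P_jk P_kj
  (with P_ik = Ppt A B i k j etc.), for every permutation (i,j,k);
  equality of C_k with the construction is projective equality, which
  also requires the construction to be well defined (nonzero).\<close>
definition presum_point :: "real^3^3 \<Rightarrow> real^3^3 \<Rightarrow> real^3^3 \<Rightarrow> bool" where
  "presum_point A B C \<longleftrightarrow> triangle A \<and> triangle B \<and> persp_point A B \<and>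
     (\<forall>i j k. i \<noteq> j \<and> j \<noteq> k \<and> i \<noteq> k \<longrightarrow>
        proj_eq (C$k)
          (meet (join (Ppt A B i k j) (Ppt A B k i j))
                (join (Ppt A B j k i) (Ppt A B k j i))))"

definition presum_line :: "real^3^3 \<Rightarrow> real^3^3 \<Rightarrow> real^3^3 \<Rightarrow> bool" where
  "presum_line A B C \<longleftrightarrow> triangle A \<and> triangle B \<and> persp_line A B \<and>
     (\<forall>i j k. i \<noteq> j \<and> j \<noteq> k \<and> i \<noteq> k \<longrightarrow>
        proj_eq (C$k) (meet (join (A$i) (B$j)) (join (A$j) (B$i))))"

end

theory Submission
  imports Defs
begin

text \<open>Commutativity holds because both constructions are symmetric in \<open>A\<close> and \<open>B\<close> up to the
  sign of homogeneous coordinates. For cancellation in the point case, the line \<open>P\<^sub>j\<^sub>kP\<^sub>k\<^sub>j\<close>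
  carries both \<open>C\<^sub>j\<close> and \<open>C\<^sub>k\<close>, so for the pair \<open>(A, C)\<close> the auxiliary point
  \<open>A\<^sub>iA\<^sub>k \<inter> C\<^sub>jC\<^sub>k\<close> is \<open>P\<^sub>k\<^sub>j\<close>. The \<open>k\<close>-th vertex of \<open>A \<boxplus> C\<close> is therefore the meet of
  \<open>P\<^sub>j\<^sub>kP\<^sub>j\<^sub>i\<close> and \<open>P\<^sub>i\<^sub>kP\<^sub>i\<^sub>j\<close>, which are the lines \<open>B\<^sub>kB\<^sub>i\<close> and \<open>B\<^sub>kB\<^sub>j\<close>; so it is \<open>B\<^sub>k\<close>.
  In the line case \<open>C\<^sub>j\<close> lies on \<open>A\<^sub>iB\<^sub>k\<close> and \<open>C\<^sub>i\<close> on \<open>A\<^sub>jB\<^sub>k\<close>, so \<open>A\<^sub>iC\<^sub>j \<inter> A\<^sub>jC\<^sub>i = B\<^sub>k\<close>.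
  The third law follows from the second by commutativity.\<close>

lemma proj_eq_iff_scaleR:
  "proj_eq p q \<longleftrightarrow> q \<noteq> 0 \<and> (\<exists>c. c \<noteq> 0 \<and> p = c *\<^sub>R q)"
proof
  assume "proj_eq p q"
  then have "collinear {0, q, p}" and "q \<noteq> 0" and "p \<noteq> 0"
    using cross_eq_0[of q p] cross_skew[of p q] unfolding proj_eq_def by auto
  then obtain c where "p = c *\<^sub>R q"
    unfolding collinear_lemma by auto
  with \<open>q \<noteq> 0\<close> \<open>p \<noteq> 0\<close> show "q \<noteq> 0 \<and> (\<exists>c. c \<noteq> 0 \<and> p = c *\<^sub>R q)" by auto
next
  assume "q \<noteq> 0 \<and> (\<exists>c. c \<noteq> 0 \<and> p = c *\<^sub>R q)"
  then show "proj_eq p q"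
    unfolding proj_eq_def by (auto simp: cross_mult_left)
qed

lemma proj_eq_nonzero: "proj_eq p q \<Longrightarrow> p \<noteq> 0" "proj_eq p q \<Longrightarrow> q \<noteq> 0"
  unfolding proj_eq_def by simp_all

lemma proj_eq_refl: "p \<noteq> 0 \<Longrightarrow> proj_eq p p"
  unfolding proj_eq_def by simp

lemma proj_eq_sym: "proj_eq p q \<Longrightarrow> proj_eq q p"
  unfolding proj_eq_def by (metis cross_skew neg_equal_0_iff_equal)

lemma proj_eq_trans: "proj_eq p q \<Longrightarrow> proj_eq q r \<Longrightarrow> proj_eq p r"
  unfolding proj_eq_iff_scaleR by (metis scaleR_scaleR mult_eq_0_iff)

lemma proj_eq_uminus_right [simp]: "proj_eq p (- q) \<longleftrightarrow> proj_eq p q"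
  unfolding proj_eq_def by simp

lemma incident_uminus_right [simp]: "incident p (- l) \<longleftrightarrow> incident p l"
  unfolding incident_def by simp

lemma incident_uminus_left [simp]: "incident (- p) l \<longleftrightarrow> incident p l"
  unfolding incident_def by simp

lemma join_skew: "join q p = - join p q"
  unfolding join_def by (rule cross_skew)

lemma meet_skew: "meet m l = - meet l m"
  unfolding meet_def by (rule cross_skew)

lemma meet_uminus [simp]: "meet (- l) m = - meet l m" "meet l (- m) = - meet l m"
  unfolding meet_def by simp_all

lemma join_uminus [simp]: "join (- p) q = - join p q" "join p (- q) = - join p q"
  unfolding join_def by simp_all

lemma incident_join [simp]: "incident p (join p q)" "incident q (join p q)"
  unfolding incident_def join_def by (simp_all add: dot_cross_self)

lemma incident_meet [simp]: "incident (meet l m) l" "incident (meet l m) m"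
  unfolding incident_def meet_def by (simp_all add: dot_cross_self inner_commute)

lemma join_nonzero: "join p q \<noteq> 0 \<Longrightarrow> p \<noteq> 0" "join p q \<noteq> 0 \<Longrightarrow> q \<noteq> 0"
  unfolding join_def by auto

lemma meet_nonzero: "meet l m \<noteq> 0 \<Longrightarrow> l \<noteq> 0" "meet l m \<noteq> 0 \<Longrightarrow> m \<noteq> 0"
  unfolding meet_def by auto

lemma incident_proj_eq: "proj_eq p p' \<Longrightarrow> incident p' l \<Longrightarrow> incident p l"
  unfolding proj_eq_iff_scaleR incident_def by auto

lemma proj_eq_cross3:
  assumes "proj_eq p p'" "proj_eq q q'" "cross3 p q \<noteq> 0"
  shows "proj_eq (cross3 p q) (cross3 p' q')"
proof -
  obtain a b where "p = a *\<^sub>R p'" "q = b *\<^sub>R q'"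
    using assms(1,2) unfolding proj_eq_iff_scaleR by blast
  then have "cross3 p q = (a * b) *\<^sub>R cross3 p' q'"
    by (simp add: cross_mult_left cross_mult_right)
  with assms(3) show ?thesis
    unfolding proj_eq_iff_scaleR by auto
qed

lemma proj_eq_join:
  "proj_eq p p' \<Longrightarrow> proj_eq q q' \<Longrightarrow> join p q \<noteq> 0 \<Longrightarrow> proj_eq (join p q) (join p' q')"
  unfolding join_def by (rule proj_eq_cross3)

lemma proj_eq_meet:
  "proj_eq l l' \<Longrightarrow> proj_eq m m' \<Longrightarrow> meet l m \<noteq> 0 \<Longrightarrow> proj_eq (meet l m) (meet l' m')"
  unfolding meet_def by (rule proj_eq_cross3)

text \<open>A nonzero vector orthogonal to two independent vectors is a multiple of their cross
  product; read for points and lines, this says that two distinct points span a unique line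
  and that two distinct lines meet in a unique point.\<close>

lemma proj_eq_cross3_if_orthogonal:
  assumes "l \<noteq> 0" "l \<bullet> p = 0" "l \<bullet> q = 0" "cross3 p q \<noteq> 0"
  shows "proj_eq (cross3 p q) l"
proof -
  have "cross3 l (cross3 p q) = (l \<bullet> q) *\<^sub>R p - (l \<bullet> p) *\<^sub>R q"
    using exhaust_3 by (force simp add: cross3_simps)
  with assms show ?thesis
    unfolding proj_eq_def by (metis cross_skew diff_zero neg_equal_0_iff_equal scale_zero_left)
qed

lemma proj_eq_join_if_incident:
  "incident p l \<Longrightarrow> incident q l \<Longrightarrow> l \<noteq> 0 \<Longrightarrow> join p q \<noteq> 0 \<Longrightarrow> proj_eq (join p q) l"
  unfolding incident_def join_def
  by (rule proj_eq_cross3_if_orthogonal) (simp_all add: inner_commute)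

lemma proj_eq_meet_if_incident:
  "incident p l \<Longrightarrow> incident p m \<Longrightarrow> p \<noteq> 0 \<Longrightarrow> meet l m \<noteq> 0 \<Longrightarrow> proj_eq (meet l m) p"
  unfolding incident_def meet_def by (rule proj_eq_cross3_if_orthogonal)

lemma proj_eq_meet_common_point:
  assumes "proj_eq d (meet l' m')" "proj_eq l' l" "proj_eq m' m"
    and "incident b l" "incident b m" "b \<noteq> 0"
  shows "proj_eq d b"
proof -
  have "proj_eq (meet l' m') (meet l m)"
    using assms(1-3) proj_eq_meet proj_eq_nonzero by blast
  moreover have "proj_eq (meet l m) b"
    using calculation assms(4-6) proj_eq_meet_if_incident proj_eq_nonzero by blast
  ultimately show ?thesis
    using assms(1) proj_eq_trans by blast
qed

lemma exists_other_indices: "\<exists>i j. i \<noteq> j \<and> j \<noteq> k \<and> i \<noteq> (k::3)"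
proof -
  have "(1::3) \<noteq> 2" "(1::3) \<noteq> 3" "(2::3) \<noteq> 3" by simp_all
  with exhaust_3[of k] show ?thesis by metis
qed

lemma presum_pointD:
  "presum_point A B C \<Longrightarrow> i \<noteq> j \<Longrightarrow> j \<noteq> k \<Longrightarrow> i \<noteq> k \<Longrightarrow>
    proj_eq (C$k) (meet (join (Ppt A B i k j) (Ppt A B k i j)) (join (Ppt A B j k i) (Ppt A B k j i)))"
  unfolding presum_point_def by blast

lemma presum_lineD:
  "presum_line A B C \<Longrightarrow> i \<noteq> j \<Longrightarrow> j \<noteq> k \<Longrightarrow> i \<noteq> k \<Longrightarrow>
    proj_eq (C$k) (meet (join (A$i) (B$j)) (join (A$j) (B$i)))"
  unfolding presum_line_def by blast

text \<open>The line \<open>P\<^sub>z\<^sub>yP\<^sub>y\<^sub>z\<close> carries both \<open>C\<^sub>y\<close> and \<open>C\<^sub>z\<close>, hence it is the line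
  \<open>C\<^sub>yC\<^sub>z\<close>, and it meets \<open>A\<^sub>xA\<^sub>z\<close> in \<open>P\<^sub>z\<^sub>y\<close>.\<close>

lemma Ppt_presum_point:
  assumes C: "presum_point A B C" and xyz: "x \<noteq> y" "y \<noteq> z" "x \<noteq> z"
    and Q: "Ppt A C x y z \<noteq> 0"
  shows "proj_eq (Ppt A C x y z) (Ppt A B z y x)"
proof -
  let ?P = "Ppt A B"
  define L where "L = join (?P z y x) (?P y z x)"
  have Cy: "proj_eq (C$y) (meet (join (?P x y z) (?P y x z)) L)"
    unfolding L_def using presum_pointD[OF C, of x z y] xyz by simp
  have Cz: "proj_eq (C$z) (meet L (join (?P x z y) (?P z x y)))"
    unfolding L_def using presum_pointD[OF C, of y x z] xyz
    by (simp add: join_skew[of "?P y z x"])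
  have "L \<noteq> 0"
    using Cy by (metis meet_nonzero(2) proj_eq_nonzero(2))
  have "join (C$y) (C$z) \<noteq> 0" "join (A$x) (A$z) \<noteq> 0"
    using Q unfolding Ppt_def by (auto dest: meet_nonzero)
  have "proj_eq (join (C$y) (C$z)) L"
    using Cy Cz \<open>L \<noteq> 0\<close> \<open>join (C$y) (C$z) \<noteq> 0\<close>
    by (metis incident_meet incident_proj_eq proj_eq_join_if_incident)
  moreover have "proj_eq (join (A$x) (A$z)) (join (A$z) (A$x))"
    using \<open>join (A$x) (A$z) \<noteq> 0\<close> by (simp add: join_skew[of "A$z"] proj_eq_refl)
  moreover have "incident (?P z y x) (join (A$z) (A$x))" "incident (?P z y x) L"
    unfolding Ppt_def L_def by simp_all
  moreover have "?P z y x \<noteq> 0"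
    using \<open>L \<noteq> 0\<close> unfolding L_def by (rule join_nonzero)
  ultimately show ?thesis
    using proj_eq_meet_common_point proj_eq_refl[OF Q] unfolding Ppt_def[of A C] by blast
qed

lemma presum_point_cancel_vertex:
  assumes C: "presum_point A B C" and D: "presum_point A C D"
    and ijk: "i \<noteq> j" "j \<noteq> k" "i \<noteq> k"
  shows "proj_eq (D$k) (B$k)"
proof -
  let ?P = "Ppt A B" and ?Q = "Ppt A C"
  have Dk: "proj_eq (D$k) (meet (join (?Q i k j) (?Q k i j)) (join (?Q j k i) (?Q k j i)))"
    using presum_pointD[OF D ijk] .
  then have "join (?Q i k j) (?Q k i j) \<noteq> 0" "join (?Q j k i) (?Q k j i) \<noteq> 0"
    by (auto dest: proj_eq_nonzero meet_nonzero)
  then have l: "proj_eq (join (?Q i k j) (?Q k i j)) (join (?P j k i) (?P j i k))"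
    and m: "proj_eq (join (?Q j k i) (?Q k j i)) (join (?P i k j) (?P i j k))"
    using C ijk by (auto intro!: proj_eq_join Ppt_presum_point dest: join_nonzero)
  then have "?P j k i \<noteq> 0" "?P i k j \<noteq> 0"
    by (auto dest: proj_eq_nonzero join_nonzero)
  then have "join (B$k) (B$i) \<noteq> 0" "join (B$k) (B$j) \<noteq> 0"
    unfolding Ppt_def by (auto dest: meet_nonzero)
  have "incident (?P j k i) (join (B$k) (B$i))" "incident (?P j i k) (join (B$k) (B$i))"
    "incident (?P i k j) (join (B$k) (B$j))" "incident (?P i j k) (join (B$k) (B$j))"
    unfolding Ppt_def by (simp_all add: join_skew[of "B$k"])
  then have lB: "proj_eq (join (?P j k i) (?P j i k)) (join (B$k) (B$i))"
    and mB: "proj_eq (join (?P i k j) (?P i j k)) (join (B$k) (B$j))"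
    using l m \<open>join (B$k) (B$i) \<noteq> 0\<close> \<open>join (B$k) (B$j) \<noteq> 0\<close>
    by (auto intro!: proj_eq_join_if_incident dest: proj_eq_nonzero)
  have "B$k \<noteq> 0"
    using \<open>join (B$k) (B$i) \<noteq> 0\<close> by (rule join_nonzero)
  then show ?thesis
    using proj_eq_meet_common_point[OF Dk proj_eq_trans[OF l lB] proj_eq_trans[OF m mB]]
    by simp
qed

lemma presum_line_cancel_vertex:
  assumes C: "presum_line A B C" and D: "presum_line A C D"
    and ijk: "i \<noteq> j" "j \<noteq> k" "i \<noteq> k"
  shows "proj_eq (D$k) (B$k)"
proof -
  have Dk: "proj_eq (D$k) (meet (join (A$i) (C$j)) (join (A$j) (C$i)))"
    using presum_lineD[OF D ijk] .
  have Cj: "proj_eq (C$j) (meet (join (A$i) (B$k)) (join (A$k) (B$i)))"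
    and Ci: "proj_eq (C$i) (meet (join (A$j) (B$k)) (join (A$k) (B$j)))"
    using presum_lineD[OF C, of i k j] presum_lineD[OF C, of j k i] ijk by simp_all
  have "join (A$i) (B$k) \<noteq> 0" "join (A$j) (B$k) \<noteq> 0"
    using Ci Cj by (auto dest: proj_eq_nonzero meet_nonzero)
  moreover have "join (A$i) (C$j) \<noteq> 0" "join (A$j) (C$i) \<noteq> 0"
    using Dk by (auto dest: proj_eq_nonzero meet_nonzero)
  moreover have "incident (C$j) (join (A$i) (B$k))" "incident (C$i) (join (A$j) (B$k))"
    using Ci Cj incident_meet incident_proj_eq by blast+
  ultimately have l: "proj_eq (join (A$i) (C$j)) (join (A$i) (B$k))"
    and m: "proj_eq (join (A$j) (C$i)) (join (A$j) (B$k))"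
    by (simp_all add: proj_eq_join_if_incident)
  have "B$k \<noteq> 0"
    using \<open>join (A$i) (B$k) \<noteq> 0\<close> by (rule join_nonzero)
  then show ?thesis
    using proj_eq_meet_common_point[OF Dk l m] by simp
qed

lemma Ppt_swap: "Ppt B A x y z = - Ppt A B y x z"
  unfolding Ppt_def meet_def by (rule cross_skew)

lemma persp_point_commute: "persp_point B A \<longleftrightarrow> persp_point A B"
proof -
  have "join (B$i) (A$i) = - join (A$i) (B$i)" for i
    by (rule join_skew)
  then show ?thesis
    unfolding persp_point_def by simp
qed

lemma persp_line_commute: "persp_line B A \<longleftrightarrow> persp_line A B"
proof -
  have "meet (join (B$k) (B$j)) (join (A$k) (A$j)) = - meet (join (A$k) (A$j)) (join (B$k) (B$j))"
    for j k by (rule meet_skew)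
  then show ?thesis
    unfolding persp_line_def by simp
qed

lemma presum_point_commute: "presum_point B A C \<longleftrightarrow> presum_point A B C"
proof -
  have construction_commute:
    "meet (join (Ppt B A i k j) (Ppt B A k i j)) (join (Ppt B A j k i) (Ppt B A k j i))
      = meet (join (Ppt A B i k j) (Ppt A B k i j)) (join (Ppt A B j k i) (Ppt A B k j i))"
    for i j k
    unfolding Ppt_swap[of B A] join_uminus minus_minus
      join_skew[of "Ppt A B k i j" "Ppt A B i k j"]
      join_skew[of "Ppt A B k j i" "Ppt A B j k i"]
    by simp
  show ?thesis
    unfolding presum_point_def persp_point_commute[of B A] construction_commute
    by blast
qed

lemma presum_line_commute: "presum_line B A C \<longleftrightarrow> presum_line A B C"
proof -
  have construction_commute:
    "meet (join (B$i) (A$j)) (join (B$j) (A$i)) = - meet (join (A$i) (B$j)) (join (A$j) (B$i))"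
    for i j
    unfolding join_skew[of "B$i"] join_skew[of "B$j"] meet_uminus minus_minus
    by (rule meet_skew)
  show ?thesis
    unfolding presum_line_def persp_line_commute[of B A] construction_commute proj_eq_uminus_right
    by blast
qed

lemma presum_point_unique:
  assumes "presum_point A B C" "presum_point A B D"
  shows "tri_eq C D"
  unfolding tri_eq_def
proof
  fix k :: 3
  obtain i j where ijk: "i \<noteq> j" "j \<noteq> k" "i \<noteq> k"
    using exists_other_indices by blast
  show "proj_eq (C$k) (D$k)"
    using presum_pointD[OF assms(1) ijk] presum_pointD[OF assms(2) ijk]
    by (blast intro: proj_eq_trans proj_eq_sym)
qed

lemma presum_line_unique:
  assumes "presum_line A B C" "presum_line A B D"
  shows "tri_eq C D"
  unfolding tri_eq_def
proof
  fix k :: 3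
  obtain i j where ijk: "i \<noteq> j" "j \<noteq> k" "i \<noteq> k"
    using exists_other_indices by blast
  show "proj_eq (C$k) (D$k)"
    using presum_lineD[OF assms(1) ijk] presum_lineD[OF assms(2) ijk]
    by (blast intro: proj_eq_trans proj_eq_sym)
qed

lemma presum_point_cancel: "presum_point A B C \<Longrightarrow> presum_point A C D \<Longrightarrow> tri_eq D B"
  unfolding tri_eq_def by (meson exists_other_indices presum_point_cancel_vertex)

lemma presum_line_cancel: "presum_line A B C \<Longrightarrow> presum_line A C D \<Longrightarrow> tri_eq D B"
  unfolding tri_eq_def by (meson exists_other_indices presum_line_cancel_vertex)

theorem lemma1:
  shows "(\<forall>A B C D. presum_point A B C \<and> presum_point B A D \<longrightarrow> tri_eq C D)
       \<and> (\<forall>A B C D. presum_point A B C \<and> presum_point A C D \<longrightarrow> tri_eq D B)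
       \<and> (\<forall>A B C D. presum_point A B C \<and> presum_point B C D \<longrightarrow> tri_eq D A)
       \<and> (\<forall>A B C D. presum_line A B C \<and> presum_line B A D \<longrightarrow> tri_eq C D)
       \<and> (\<forall>A B C D. presum_line A B C \<and> presum_line A C D \<longrightarrow> tri_eq D B)
       \<and> (\<forall>A B C D. presum_line A B C \<and> presum_line B C D \<longrightarrow> tri_eq D A)"
proof (intro conjI allI impI; elim conjE)
  fix A B C D :: "real^3^3"
  show "tri_eq C D" if "presum_point A B C" "presum_point B A D"
    using that(1) presum_point_commute[THEN iffD1, OF that(2)] by (rule presum_point_unique)
  show "tri_eq D B" if "presum_point A B C" "presum_point A C D"
    using that by (rule presum_point_cancel)
  show "tri_eq D A" if "presum_point A B C" "presum_point B C D"
    using presum_point_commute[THEN iffD1, OF that(1)] that(2) by (rule presum_point_cancel)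
  show "tri_eq C D" if "presum_line A B C" "presum_line B A D"
    using that(1) presum_line_commute[THEN iffD1, OF that(2)] by (rule presum_line_unique)
  show "tri_eq D B" if "presum_line A B C" "presum_line A C D"
    using that by (rule presum_line_cancel)
  show "tri_eq D A" if "presum_line A B C" "presum_line B C D"
    using presum_line_commute[THEN iffD1, OF that(1)] that(2) by (rule presum_line_cancel)
qed

end
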